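(* There exists $N$ such that for all positive integers $a,b\ge N$ we have $r(a,b)\le \frac{9}{8}$. More precisely, for all such $a,b$, the quotient $$\frac{\phi(c!)}{\phi(a!)\,\phi(b!)},\qquad c=a+b+\left\lfloor\frac{a+b}{8}\right\rfloor,$$ is an integer.
   Context: $\phi$ denotes Euler's totient function. For positive integers $a,b$, $c(a,b)$ is the least positive integer $c$ such that $\phi(a!)\,\phi(b!)$ divides $\phi(c!)$, and $r(a,b)=c(a,b)/(a+b)$. *)

theory Defs
  imports "HOL-Number_Theory.Number_Theory"
begin

definition c_ab :: "nat \<Rightarrow> nat \<Rightarrow> nat" where
  "c_ab a b = (LEAST c. 0 < c \<and> totient (fact a) * totient (fact b) dvd totient (fact c))"

definition r_ab :: "nat \<Rightarrow> nat \<Rightarrow> real" where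
  "r_ab a b = real (c_ab a b) / real (a + b)"

end

theory Submission
  imports Defs
begin

text \<open>
  For a prime \<open>q\<close> one has \<open>v\<^sub>q(\<phi>(n!)) = v\<^sub>q(n!) - 1 + \<Sum>\<^sub>p\<^sub>\<le>\<^sub>n v\<^sub>q(p - 1)\<close>.
  For \<open>a \<le> b\<close> and \<open>m = a div 4\<close> the factorial \<open>m!\<close> still fits into
  \<open>c!/(a! b!)\<close>, \<open>c = a + b + (a + b) div 8\<close>, so it suffices that
  \<open>\<Sum>\<^sub>p\<^sub>\<le>\<^sub>a v\<^sub>q(p - 1) \<le> 1 + v\<^sub>q(m!)\<close> for all primes \<open>q \<le> a\<close>.
  The left side is the sum over the levels \<open>j\<close> of the number of primes \<open>p \<le> a\<close> with
  \<open>p \<equiv> 1 (mod q\<^sup>j)\<close>; the right side is at least Legendre's sum \<open>1 + \<Sum>\<^sub>j m div q\<^sup>j\<close>.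

  For \<open>q \<le> 7\<close> the first four levels are bounded by \<open>\<pi>(a)\<close>, which is \<open>o(a)\<close> by
  Chebyshev's argument with central binomial coefficients, and the remaining levels by a
  geometric series; this is already smaller than \<open>m div q\<close>.

  For \<open>q \<ge> 11\<close> the primes on level \<open>j\<close> are \<open>p = 1 + 2 u q\<^sup>j\<close> with \<open>p\<close> prime to 105,
  so \<open>u\<close> avoids one residue class modulo each of 3, 5 and 7, and only 48 of every 105
  consecutive \<open>u\<close> survive. A finite computation turns this into at most \<open>T/4 + 1\<close> primes on
  level \<open>j\<close>, where \<open>T = (a - 1) div q\<^sup>j\<close>, and at most \<open>T/4 - 1\<close> once \<open>T \<ge> 120\<close>.
  Since \<open>T\<close> drops by a factor \<open>q\<^sup>2 > 120\<close> over two levels, at most two levels with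
  \<open>0 < T < 120\<close> can exceed \<open>T/4\<close>, and they are paid for by the levels with \<open>T \<ge> 120\<close>
  except for a single surplus of 1.
\<close>

section \<open>The exponent of a prime in \<open>\<phi>(n!)\<close>\<close>

definition primes_le :: "nat \<Rightarrow> nat set" where
  "primes_le n = {p. prime p \<and> p \<le> n}"

definition pred_primes_multiplicity :: "nat \<Rightarrow> nat \<Rightarrow> nat" where
  "pred_primes_multiplicity q n = (\<Sum>p\<in>primes_le n. multiplicity q (p - 1))"

definition primes_1_mod :: "nat \<Rightarrow> nat \<Rightarrow> nat set" where
  "primes_1_mod d n = {p \<in> primes_le n. d dvd p - 1}"

lemma finite_primes_le [simp]: "finite (primes_le n)"
  unfolding primes_le_def by (rule finite_subset[of _ "{..n}"]) auto

lemma primes_le_mono: "m \<le> n \<Longrightarrow> primes_le m \<subseteq> primes_le n"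
  by (auto simp: primes_le_def)

lemma card_primes_le_le: "card (primes_le n) \<le> n"
proof -
  have "primes_le n \<subseteq> {1..n}"
    using prime_ge_1_nat by (auto simp: primes_le_def)
  then show ?thesis
    using card_mono[of "{1..n}"] by fastforce
qed

lemma prime_factors_fact_eq_primes_le: "prime_factors (fact n :: nat) = primes_le n"
  using prime_ge_2_nat by (auto simp: prime_factors_fact primes_le_def)

lemma multiplicity_totient_fact:
  assumes q: "prime q"
  shows "multiplicity q (totient (fact n)) =
           multiplicity q (fact n :: nat) - 1 + pred_primes_multiplicity q n"
proof -
  define e where "e p = multiplicity p (fact n :: nat) - 1" for p
  have p_gt_1: "1 < p" if "p \<in> primes_le n" for p
    using that prime_gt_1_nat by (simp add: primes_le_def)
  have factor: "multiplicity q (p ^ e p * (p - 1)) = (if p = q then e p else 0) + multiplicity q (p - 1)"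
    if "p \<in> primes_le n" for p
  proof -
    have p: "prime p" using that by (simp add: primes_le_def)
    have "multiplicity q (p ^ e p * (p - 1)) = multiplicity q (p ^ e p) + multiplicity q (p - 1)"
      using p_gt_1[OF that] q by (simp add: prime_elem_multiplicity_mult_distrib)
    also have "multiplicity q (p ^ e p) = (if p = q then e p else 0)"
      using p q by (auto simp: multiplicity_distinct_prime_power)
    finally show ?thesis .
  qed
  have "totient (fact n) = (\<Prod>p\<in>primes_le n. p ^ e p * (p - 1))"
    unfolding e_def prime_factors_fact_eq_primes_le[symmetric] by (rule totient_formula1) simp
  moreover have "0 \<notin> (\<lambda>p. p ^ e p * (p - 1)) ` primes_le n"
    using p_gt_1 by fastforce
  ultimately have "multiplicity q (totient (fact n)) = (\<Sum>p\<in>primes_le n. multiplicity q (p ^ e p * (p - 1)))"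
    using q by (simp add: prime_elem_multiplicity_prod_distrib)
  also have "\<dots> = (\<Sum>p\<in>primes_le n. (if p = q then e p else 0) + multiplicity q (p - 1))"
    by (rule sum.cong[OF refl factor])
  also have "\<dots> = (if q \<in> primes_le n then e q else 0) + pred_primes_multiplicity q n"
    by (simp add: sum.distrib sum.delta' pred_primes_multiplicity_def)
  also have "(if q \<in> primes_le n then e q else 0) = e q"
  proof (cases "q \<in> primes_le n")
    case False
    with q have "\<not> q dvd (fact n :: nat)"
      by (simp add: prime_dvd_fact_iff primes_le_def)
    then show ?thesis
      using False by (simp add: e_def not_dvd_imp_multiplicity_0)
  qed simp
  finally show ?thesis
    by (simp add: e_def)
qed

lemma card_dvd_atLeastAtMost:
  assumes d: "0 < d"
  shows "card {i \<in> {1..m}. d dvd (i :: nat)} = m div d"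
proof -
  have "{i \<in> {1..m}. d dvd i} = (\<lambda>k. d * k) ` {1..m div d}"
  proof (rule Set.set_eqI)
    fix i
    show "i \<in> {i \<in> {1..m}. d dvd i} \<longleftrightarrow> i \<in> (\<lambda>k. d * k) ` {1..m div d}"
    proof
      assume "i \<in> {i \<in> {1..m}. d dvd i}"
      then obtain k where k: "i = d * k" "1 \<le> i" "i \<le> m" by auto
      then have "1 \<le> k" by (cases k) auto
      moreover have "k \<le> m div d"
        using k d by (metis div_le_mono nonzero_mult_div_cancel_left not_gr0)
      ultimately show "i \<in> (\<lambda>k. d * k) ` {1..m div d}"
        using k by auto
    next
      assume "i \<in> (\<lambda>k. d * k) ` {1..m div d}"
      then obtain k where k: "k \<in> {1..m div d}" "i = d * k" by auto
      have "d * k \<le> d * (m div d)" using k(1) by simp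
      also have "\<dots> \<le> m" by simp
      finally show "i \<in> {i \<in> {1..m}. d dvd i}"
        using k d by auto
    qed
  qed
  also have "card \<dots> = m div d"
    using d by (subst card_image) (auto simp: inj_on_def)
  finally show ?thesis .
qed

lemma card_prime_power_dvd:
  assumes q: "prime (q :: nat)" and x: "0 < x"
  shows "card {j \<in> {1..K}. q ^ j dvd x} = min K (multiplicity q x)"
proof -
  have "q ^ j dvd x \<longleftrightarrow> j \<le> multiplicity q x" for j
    using q x by (intro power_dvd_iff_le_multiplicity) (auto simp: prime_gt_1_nat)
  then have "{j \<in> {1..K}. q ^ j dvd x} = {1..min K (multiplicity q x)}"
    by (intro Set.set_eqI) simp
  then show ?thesis by simp
qed

lemma sum_card_swap:
  assumes "finite I" "finite J"
  shows "(\<Sum>i\<in>I. card {j \<in> J. R i j}) = (\<Sum>j\<in>J. card {i \<in> I. R i j})"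
proof -
  have card_eq: "card {x \<in> A. P x} = (\<Sum>x\<in>A. if P x then 1 else 0)" if "finite A" for A and P :: "'c \<Rightarrow> bool"
    using that by (simp add: sum.If_cases Int_def)
  show ?thesis
    using assms by (simp add: card_eq sum.swap[of _ I J])
qed

lemma sum_div_prime_power_le_multiplicity_fact:
  assumes q: "prime q"
  shows "(\<Sum>j\<in>{1..K}. m div q ^ j) \<le> multiplicity q (fact m :: nat)"
proof -
  have "multiplicity q (fact m :: nat) = (\<Sum>i\<in>{1..m}. multiplicity q i)"
    using q by (simp add: fact_prod prime_elem_multiplicity_prod_distrib)
  also have "\<dots> \<ge> (\<Sum>i\<in>{1..m}. card {j \<in> {1..K}. q ^ j dvd i})"
  proof (rule sum_mono)
    fix i :: nat assume "i \<in> {1..m}"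
    then show "card {j \<in> {1..K}. q ^ j dvd i} \<le> multiplicity q i"
      using card_prime_power_dvd[OF q, of i K] by simp
  qed
  also have "(\<Sum>i\<in>{1..m}. card {j \<in> {1..K}. q ^ j dvd i}) = (\<Sum>j\<in>{1..K}. card {i \<in> {1..m}. q ^ j dvd i})"
    by (rule sum_card_swap) auto
  also have "\<dots> = (\<Sum>j\<in>{1..K}. m div q ^ j)"
    using q by (intro sum.cong refl card_dvd_atLeastAtMost) (simp add: prime_gt_0_nat)
  finally show ?thesis .
qed

lemma multiplicity_less_self:
  assumes "prime (q :: nat)" "0 < x"
  shows "multiplicity q x < x"
proof -
  have "multiplicity q x < 2 ^ multiplicity q x" by (rule less_exp)
  also have "\<dots> \<le> q ^ multiplicity q x"
    using prime_ge_2_nat[OF assms(1)] by (rule power_mono) simp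
  also have "\<dots> \<le> x"
    using assms(2) by (intro dvd_imp_le multiplicity_dvd)
  finally show ?thesis .
qed

lemma pred_primes_multiplicity_eq_sum_card_primes_1_mod:
  assumes q: "prime q"
  shows "pred_primes_multiplicity q n = (\<Sum>j\<in>{1..n}. card (primes_1_mod (q ^ j) n))"
proof -
  have "multiplicity q (p - 1) = card {j \<in> {1..n}. q ^ j dvd p - 1}" if "p \<in> primes_le n" for p
  proof -
    from that have "1 < p" "p \<le> n"
      using prime_gt_1_nat by (auto simp: primes_le_def)
    moreover from this have "multiplicity q (p - 1) < p - 1"
      using multiplicity_less_self[OF q] by simp
    ultimately show ?thesis
      using card_prime_power_dvd[OF q, of "p - 1" n] by simp
  qed
  then have "pred_primes_multiplicity q n = (\<Sum>p\<in>primes_le n. card {j \<in> {1..n}. q ^ j dvd p - 1})"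
    unfolding pred_primes_multiplicity_def by (rule sum.cong[OF refl])
  also have "\<dots> = (\<Sum>j\<in>{1..n}. card (primes_1_mod (q ^ j) n))"
    unfolding primes_1_mod_def by (rule sum_card_swap) auto
  finally show ?thesis .
qed

lemma card_primes_1_mod_le_card_primes_le: "card (primes_1_mod d n) \<le> card (primes_le n)"
  unfolding primes_1_mod_def by (rule card_mono) auto

lemma card_primes_1_mod_le:
  assumes d: "0 < d"
  shows "card (primes_1_mod d n) \<le> (n - 1) div d"
proof -
  have "card (primes_1_mod d n) \<le> card {t \<in> {1..n - 1}. d dvd t}"
  proof (rule card_inj_on_le)
    show "inj_on (\<lambda>p. p - 1) (primes_1_mod d n)"
      by (rule inj_onI) (auto simp: primes_1_mod_def primes_le_def dest!: prime_gt_1_nat)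
    show "(\<lambda>p. p - 1) ` primes_1_mod d n \<subseteq> {t \<in> {1..n - 1}. d dvd t}"
      by (auto simp: primes_1_mod_def primes_le_def dest!: prime_gt_1_nat)
  qed auto
  also have "\<dots> = (n - 1) div d"
    using d by (rule card_dvd_atLeastAtMost)
  finally show ?thesis .
qed

lemma pred_primes_multiplicity_eq_0:
  assumes q: "prime q" and "n < q"
  shows "pred_primes_multiplicity q n = 0"
proof -
  have "card (primes_1_mod (q ^ j) n) = 0" if "1 \<le> j" for j
  proof -
    have "q ^ 1 \<le> q ^ j"
      using that q by (intro power_increasing) (simp_all add: Suc_leI prime_gt_0_nat)
    then have "n - 1 < q ^ j"
      using \<open>n < q\<close> by simp
    then show ?thesis
      using card_primes_1_mod_le[of "q ^ j" n] q by (simp add: prime_gt_0_nat)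
  qed
  then show ?thesis
    using q by (simp add: pred_primes_multiplicity_eq_sum_card_primes_1_mod)
qed

lemma pred_primes_multiplicity_mono:
  "m \<le> n \<Longrightarrow> pred_primes_multiplicity q m \<le> pred_primes_multiplicity q n"
  unfolding pred_primes_multiplicity_def by (intro sum_mono2 primes_le_mono) auto

lemma multiplicity_fact_add_le:
  assumes q: "prime q" and c: "a + b + m \<le> c"
  shows "multiplicity q (fact a :: nat) + multiplicity q (fact b :: nat) + multiplicity q (fact m :: nat)
           \<le> multiplicity q (fact c :: nat)"
proof -
  have "(fact a * fact b :: nat) * fact m dvd fact (a + b) * fact m"
    using fact_fact_dvd_fact[of a b] by simp
  also have "\<dots> dvd fact (a + b + m)"
    by (rule fact_fact_dvd_fact)
  also have "\<dots> dvd fact c"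
    using c by (rule fact_dvd)
  finally have "multiplicity q (fact a * fact b * fact m :: nat) \<le> multiplicity q (fact c :: nat)"
    by (rule dvd_imp_multiplicity_le) simp
  then show ?thesis
    using q by (simp add: prime_elem_multiplicity_mult_distrib)
qed

lemma totient_fact_mult_dvd_totient_fact:
  assumes c: "a + b + m \<le> c" and ab: "a \<le> b"
    and small: "\<And>q. prime q \<Longrightarrow> q \<le> a \<Longrightarrow>
                  pred_primes_multiplicity q a \<le> 1 + multiplicity q (fact m :: nat)"
  shows "totient (fact a) * totient (fact b) dvd totient (fact c)"
proof (rule multiplicity_le_imp_dvd)
  show "totient (fact a) * totient (fact b) \<noteq> 0" by simp
next
  fix q :: nat assume q: "prime q"
  let ?v = "\<lambda>n. multiplicity q (fact n :: nat)" and ?S = "\<lambda>n. pred_primes_multiplicity q n"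
  have lhs: "multiplicity q (totient (fact a) * totient (fact b)) = (?v a - 1 + ?S a) + (?v b - 1 + ?S b)"
    using q by (simp add: prime_elem_multiplicity_mult_distrib multiplicity_totient_fact)
  have rhs: "multiplicity q (totient (fact c)) = ?v c - 1 + ?S c"
    using q by (simp add: multiplicity_totient_fact)
  have v: "?v a + ?v b + ?v m \<le> ?v c"
    using q c by (rule multiplicity_fact_add_le)
  have S: "?S b \<le> ?S c"
    using c by (intro pred_primes_multiplicity_mono) simp
  show "multiplicity q (totient (fact a) * totient (fact b)) \<le> multiplicity q (totient (fact c))"
    unfolding lhs rhs
  proof (cases "q \<le> a")
    case True
    then have "q dvd (fact a :: nat)" "q dvd (fact b :: nat)"
      using q ab by (simp_all add: prime_dvd_fact_iff)
    then have "1 \<le> ?v a" "1 \<le> ?v b"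
      using q by (simp_all add: Suc_le_eq prime_multiplicity_gt_zero_iff)
    then show "?v a - 1 + ?S a + (?v b - 1 + ?S b) \<le> ?v c - 1 + ?S c"
      using small[OF q True] v S by linarith
  next
    case False
    then have "\<not> q dvd (fact a :: nat)"
      using q by (simp add: prime_dvd_fact_iff)
    then have "?v a = 0"
      by (rule not_dvd_imp_multiplicity_0)
    moreover have "?S a = 0"
      using q False by (intro pred_primes_multiplicity_eq_0) simp_all
    ultimately show "?v a - 1 + ?S a + (?v b - 1 + ?S b) \<le> ?v c - 1 + ?S c"
      using v S by linarith
  qed
qed

section \<open>A Chebyshev bound for the prime counting function\<close>

lemma prod_primes_dvd:
  fixes n :: nat
  assumes "finite A" and "\<And>p. p \<in> A \<Longrightarrow> prime p \<and> p dvd n"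
  shows "\<Prod>A dvd n"
  using assms
proof (induction A rule: finite_induct)
  case (insert p A)
  have p: "prime p" "p dvd n"
    using insert.prems by auto
  have "\<not> p dvd \<Prod>A"
  proof
    assume "p dvd \<Prod>A"
    then obtain r where "r \<in> A" "p dvd r"
      using p insert.hyps(1) by (auto simp: prime_dvd_prod_iff)
    moreover from this have "prime r"
      using insert.prems by auto
    ultimately show False
      using p insert.hyps(2) primes_dvd_imp_eq by blast
  qed
  then have "coprime p (\<Prod>A)"
    using p by (simp add: prime_imp_coprime)
  then show ?case
    using insert p by (simp add: divides_mult)
qed simp

lemma prime_dvd_central_binomial:
  assumes p: "prime p" and "n < p" "p \<le> 2 * n"
  shows "p dvd (2 * n choose n)"
proof -
  have "fact n * fact n * (2 * n choose n) = (fact (2 * n) :: nat)"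
    using binomial_fact_lemma[of n "2 * n"] by (simp add: mult_2)
  moreover have "p dvd (fact (2 * n) :: nat)"
    using assms by (simp add: prime_dvd_fact_iff)
  moreover have "\<not> p dvd (fact n :: nat)"
    using assms by (simp add: prime_dvd_fact_iff)
  ultimately show ?thesis
    using p by (metis prime_dvd_mult_iff)
qed

lemma card_primes_between_le: "n ^ card (primes_le (2 * n) - primes_le n) \<le> 4 ^ n"
proof -
  let ?Q = "primes_le (2 * n) - primes_le n"
  have "n ^ card ?Q = (\<Prod>p\<in>?Q. n)"
    by simp
  also have "\<dots> \<le> \<Prod>?Q"
    by (rule prod_mono) (auto simp: primes_le_def)
  also have "\<dots> \<le> 2 * n choose n"
    by (intro dvd_imp_le prod_primes_dvd) (auto simp: primes_le_def intro: prime_dvd_central_binomial)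
  also have "\<dots> \<le> 2 ^ (2 * n)"
    by (rule binomial_le_pow2)
  finally show ?thesis
    by (simp add: power_mult)
qed

lemma card_primes_le_double:
  "card (primes_le (2 * n)) = card (primes_le n) + card (primes_le (2 * n) - primes_le n)"
proof -
  have "primes_le (2 * n) = primes_le n \<union> (primes_le (2 * n) - primes_le n)"
    using primes_le_mono[of n "2 * n"] by auto
  then show ?thesis
    by (metis Diff_disjoint card_Un_disjoint finite_Diff finite_primes_le)
qed

lemma card_primes_le_power_of_two:
  assumes "2 * c \<le> K"
  shows "c * card (primes_le (2 ^ K)) \<le> 2 ^ K + c * 2 ^ (2 * c)"
  using assms
proof (induction K rule: dec_induct)
  case base
  have "c * card (primes_le (2 ^ (2 * c))) \<le> c * 2 ^ (2 * c)"
    by (rule mult_le_mono2[OF card_primes_le_le])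
  then show ?case
    by linarith
next
  case (step K)
  let ?Q = "primes_le (2 * 2 ^ K) - primes_le (2 ^ K)"
  have "(2 :: nat) ^ (K * card ?Q) = (2 ^ K) ^ card ?Q"
    by (simp add: power_mult)
  also have "\<dots> \<le> 4 ^ 2 ^ K"
    by (rule card_primes_between_le)
  also have "\<dots> = 2 ^ (2 * 2 ^ K)"
    by (simp add: power_mult)
  finally have "K * card ?Q \<le> 2 * 2 ^ K"
    by simp
  then have "c * card ?Q \<le> 2 ^ K"
    using step.hyps(1) mult_le_mono1[of "2 * c" K "card ?Q"] by linarith
  have "c * card (primes_le (2 ^ Suc K)) = c * card (primes_le (2 ^ K)) + c * card ?Q"
    by (simp add: card_primes_le_double distrib_left)
  then show ?case
    using step.IH \<open>c * card ?Q \<le> 2 ^ K\<close> by simp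
qed

lemma card_primes_le_bound: "c * card (primes_le n) \<le> 2 * n + c * 2 ^ (2 * c)"
proof (cases "n < 2 ^ (2 * c)")
  case True
  then show ?thesis
    using card_primes_le_le[of n] by (meson le_trans less_imp_le mult_le_mono2 trans_le_add2)
next
  case False
  then have "1 \<le> n"
    by (cases "n = 0") auto
  then obtain K where K: "2 ^ K \<le> n" "n < 2 ^ (K + 1)"
    using ex_power_ivl1[of 2 n] by auto
  have "(2 :: nat) ^ (2 * c) < 2 ^ (K + 1)"
    using False K(2) by linarith
  then have "2 * c \<le> K + 1"
    using power_strict_increasing_iff[of "2 :: nat" "2 * c" "K + 1"] by simp
  then have "c * card (primes_le (2 ^ (K + 1))) \<le> 2 ^ (K + 1) + c * 2 ^ (2 * c)"
    by (rule card_primes_le_power_of_two)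
  moreover have "card (primes_le n) \<le> card (primes_le (2 ^ (K + 1)))"
    using K(2) by (intro card_mono primes_le_mono) simp_all
  moreover have "(2 :: nat) ^ (K + 1) \<le> 2 * n"
    using K(1) by simp
  ultimately show ?thesis
    by (meson add_le_mono1 le_trans mult_le_mono2)
qed

section \<open>Small primes\<close>

lemma sum_div_powers_le:
  assumes q: "2 \<le> (q :: nat)"
  shows "(q - 1) * (\<Sum>i\<in>{1..K}. y div q ^ i) \<le> y"
proof (induction K arbitrary: y)
  case (Suc K)
  have "(\<Sum>i\<in>{1..Suc K}. y div q ^ i) = y div q ^ 1 + (\<Sum>i\<in>{Suc 1..Suc K}. y div q ^ i)"
    by (rule sum.atLeast_Suc_atMost) simp
  also have "(\<Sum>i\<in>{Suc 1..Suc K}. y div q ^ i) = (\<Sum>i\<in>{1..K}. y div q ^ Suc i)"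
    by (subst sum.atLeast_Suc_atMost_Suc_shift) (simp add: comp_def)
  also have "\<dots> = (\<Sum>i\<in>{1..K}. y div q div q ^ i)"
    by (simp add: div_mult2_eq)
  finally have "(q - 1) * (\<Sum>i\<in>{1..Suc K}. y div q ^ i)
                  = (q - 1) * (y div q) + (q - 1) * (\<Sum>i\<in>{1..K}. y div q div q ^ i)"
    by (simp add: distrib_left)
  also have "\<dots> \<le> (q - 1) * (y div q) + y div q"
    using Suc.IH[of "y div q"] by simp
  also have "\<dots> = q * (y div q)"
    using q by (simp add: algebra_simps)
  also have "\<dots> \<le> y"
    by simp
  finally show ?case .
qed simp

lemma pred_primes_multiplicity_le_small_levels:
  assumes q: "prime q" and n: "4 \<le> n"
  shows "pred_primes_multiplicity q n \<le> 4 * card (primes_le n) + (n - 1) div q ^ 4"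
proof -
  let ?A = "\<lambda>j. card (primes_1_mod (q ^ j) n)"
  define y where "y = (n - 1) div q ^ 4"
  have q2: "2 \<le> q" and q0: "0 < q"
    using q by (simp_all add: prime_ge_2_nat prime_gt_0_nat)
  have "{1..n} = {1..4} \<union> {5..n}"
    using n by auto
  then have split: "pred_primes_multiplicity q n = (\<Sum>j\<in>{1..4}. ?A j) + (\<Sum>j\<in>{5..n}. ?A j)"
    using q by (simp add: pred_primes_multiplicity_eq_sum_card_primes_1_mod sum.union_disjoint)
  have "(\<Sum>j\<in>{1..4}. ?A j) \<le> (\<Sum>j\<in>{1..4::nat}. card (primes_le n))"
    by (intro sum_mono card_primes_1_mod_le_card_primes_le)
  then have low: "(\<Sum>j\<in>{1..4}. ?A j) \<le> 4 * card (primes_le n)"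
    by simp
  have "(\<Sum>j\<in>{5..n}. ?A j) \<le> (\<Sum>j\<in>{5..n}. (n - 1) div q ^ j)"
    using q0 by (intro sum_mono card_primes_1_mod_le) simp
  also have "\<dots> = (\<Sum>i\<in>{1..n - 4}. (n - 1) div q ^ (i + 4))"
    using n sum.shift_bounds_cl_nat_ivl[of "\<lambda>j. (n - 1) div q ^ j" 1 4 "n - 4"] by simp
  also have "\<dots> = (\<Sum>i\<in>{1..n - 4}. y div q ^ i)"
    by (intro sum.cong refl) (simp add: y_def power_add div_mult2_eq[symmetric] mult.commute)
  also have "\<dots> \<le> (q - 1) * (\<Sum>i\<in>{1..n - 4}. y div q ^ i)"
  proof -
    have "1 \<le> q - 1"
      using q2 by simp
    then show ?thesis
      using mult_le_mono1[of 1 "q - 1" "\<Sum>i\<in>{1..n - 4}. y div q ^ i"] by simp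
  qed
  also have "\<dots> \<le> y"
    using q2 by (rule sum_div_powers_le)
  finally show ?thesis
    using split low y_def by linarith
qed

lemma small_prime_estimate:
  fixes q a k C :: nat
  assumes q: "2 \<le> q" "q \<le> 7"
    and k: "1000 * k \<le> 2 * a + 1000 * C" and C: "1 \<le> C" "1000 * C \<le> a"
  shows "4 * k + (a - 1) div q ^ 4 \<le> a div 4 div q"
proof -
  define m where "m = a div 4"
  define y where "y = (a - 1) div q ^ 4"
  have "q * (4 * k) \<le> 28 * k"
    using q(2) mult_le_mono1[of q 7 "4 * k"] by simp
  moreover have "8 * (q * y) \<le> a - 1"
  proof -
    have "(8 :: nat) \<le> q ^ 3"
      using q(1) power_mono[of 2 q 3] by simp
    then have "8 * q \<le> q ^ 4"
      using mult_le_mono1[of 8 "q ^ 3" q] power_add[of q 3 1] by simp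
    then have "8 * (q * y) \<le> q ^ 4 * y"
      using mult_le_mono1 by (metis mult.assoc)
    also have "\<dots> \<le> a - 1"
      by (simp add: y_def)
    finally show ?thesis .
  qed
  moreover have "m + 1 \<le> q * (m div q) + q"
    using mod_less_divisor[of q m] q(1) mult_div_mod_eq[of q m] by linarith
  moreover have "a \<le> 4 * m + 3"
    by (simp add: m_def)
  moreover have "q * (4 * k + y) = q * (4 * k) + q * y"
    by (rule distrib_left)
  ultimately have "q * (4 * k + y) \<le> q * (m div q)"
    using k C q(2) by linarith
  then show ?thesis
    using q(1) by (simp add: m_def y_def)
qed

lemma small_prime_case:
  assumes q: "prime q" "q \<le> 7" and a: "1000 * 2 ^ 2000 \<le> a"
  shows "pred_primes_multiplicity q a \<le> 1 + multiplicity q (fact (a div 4) :: nat)"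
proof -
  have "(1 :: nat) \<le> 2 ^ 2000"
    by simp
  then have "4 \<le> a"
    using a by linarith
  then have "pred_primes_multiplicity q a \<le> 4 * card (primes_le a) + (a - 1) div q ^ 4"
    using q(1) by (intro pred_primes_multiplicity_le_small_levels)
  also have "\<dots> \<le> a div 4 div q"
  proof (rule small_prime_estimate[where C = "2 ^ 2000"])
    show "2 \<le> q"
      using q(1) by (rule prime_ge_2_nat)
    show "1000 * card (primes_le a) \<le> 2 * a + 1000 * 2 ^ 2000"
      using card_primes_le_bound[of 1000 a] by simp
  qed (use q(2) a \<open>1 \<le> 2 ^ 2000\<close> in simp_all)
  also have "\<dots> \<le> multiplicity q (fact (a div 4) :: nat)"
    using sum_div_prime_power_le_multiplicity_fact[OF q(1), where K = 1 and m = "a div 4"] by simp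
  finally show ?thesis
    by simp
qed

section \<open>A sieve modulo 105\<close>

definition sieve_survivor :: "nat \<Rightarrow> nat \<Rightarrow> bool" where
  "sieve_survivor d u \<longleftrightarrow> (\<forall>r \<in> {3, 5, 7}. \<not> r dvd 1 + 2 * u * d)"

definition sieve_count :: "nat \<Rightarrow> nat \<Rightarrow> nat" where
  "sieve_count d U = card {u \<in> {1..U}. sieve_survivor d u}"

definition count_bound :: "nat \<Rightarrow> nat \<Rightarrow> bool" where
  "count_bound c U \<longleftrightarrow> c \<le> Suc (U div 2) \<and> (60 \<le> U \<longrightarrow> Suc c \<le> U div 2)"

definition survives_mod :: "nat \<Rightarrow> nat \<Rightarrow> nat \<Rightarrow> bool" where
  "survives_mod r e t \<longleftrightarrow> (1 + 2 * t * e) mod r \<noteq> 0"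

definition succ_mod :: "nat \<Rightarrow> nat \<Rightarrow> nat" where
  "succ_mod r t = (if Suc t = r then 0 else Suc t)"

lemma survives_mod_iff: "survives_mod r (d mod r) (u mod r) \<longleftrightarrow> \<not> r dvd 1 + 2 * u * d"
proof -
  have "(2 * (u mod r) * (d mod r)) mod r = (2 * u * d) mod r"
    by (metis mod_mult_eq mod_mult_right_eq mult.assoc)
  then show ?thesis
    unfolding survives_mod_def by (metis dvd_eq_mod_eq_0 mod_add_right_eq)
qed

lemma sieve_survivor_iff_residues:
  "sieve_survivor d u \<longleftrightarrow>
     survives_mod 3 (d mod 3) (u mod 3) \<and> survives_mod 5 (d mod 5) (u mod 5) \<and>
     survives_mod 7 (d mod 7) (u mod 7)"
  by (simp add: sieve_survivor_def survives_mod_iff)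

lemma succ_mod_mod: "0 < r \<Longrightarrow> succ_mod r (u mod r) = Suc u mod r"
  by (simp add: succ_mod_def mod_Suc)

lemma sieve_count_Suc:
  "sieve_count d (Suc U) = sieve_count d U + (if sieve_survivor d (Suc U) then 1 else 0)"
proof -
  have "{u \<in> {1..Suc U}. sieve_survivor d u} =
          {u \<in> {1..U}. sieve_survivor d u} \<union> (if sieve_survivor d (Suc U) then {Suc U} else {})"
    by (auto simp: le_Suc_eq)
  then show ?thesis
    unfolding sieve_count_def by (simp add: card_Un_disjoint)
qed

text \<open>
  \<open>sieve_check d3 d5 d7 t3 t5 t7 c u k\<close> scans \<open>u, \<dots>, u + k - 1\<close>, where \<open>d\<^sub>r\<close> and
  \<open>t\<^sub>r\<close> are the residues of \<open>d\<close> and of the current \<open>u\<close> modulo \<open>r\<close>, and \<open>c\<close> is the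
  number of survivors before \<open>u\<close>. Working with residues keeps the evaluation by
  \<open>code_simp\<close> cheap.
\<close>
fun sieve_check :: "nat \<Rightarrow> nat \<Rightarrow> nat \<Rightarrow> nat \<Rightarrow> nat \<Rightarrow> nat \<Rightarrow> nat \<Rightarrow> nat \<Rightarrow> nat \<Rightarrow> bool" where
  "sieve_check d3 d5 d7 t3 t5 t7 c u k =
     (if k = 0 then c = 48 else
      let c' = (if survives_mod 3 d3 t3 \<and> survives_mod 5 d5 t5 \<and> survives_mod 7 d7 t7 then Suc c else c)
      in count_bound c' u \<and>
         sieve_check d3 d5 d7 (succ_mod 3 t3) (succ_mod 5 t5) (succ_mod 7 t7) c' (Suc u) (k - 1))"

declare sieve_check.simps [simp del]

lemma sieve_check_0: "sieve_check d3 d5 d7 t3 t5 t7 c u 0 \<longleftrightarrow> c = 48"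
  by (simp add: sieve_check.simps)

lemma sieve_check_step:
  "k \<noteq> 0 \<Longrightarrow> sieve_check d3 d5 d7 t3 t5 t7 c u k \<longleftrightarrow>
     (let c' = (if survives_mod 3 d3 t3 \<and> survives_mod 5 d5 t5 \<and> survives_mod 7 d7 t7 then Suc c else c)
      in count_bound c' u \<and>
         sieve_check d3 d5 d7 (succ_mod 3 t3) (succ_mod 5 t5) (succ_mod 7 t7) c' (Suc u) (k - 1))"
  by (simp add: sieve_check.simps)

lemma sieve_check_sound:
  assumes "sieve_check (d mod 3) (d mod 5) (d mod 7) (Suc w mod 3) (Suc w mod 5) (Suc w mod 7)
             (sieve_count d w) (Suc w) k"
  shows "(\<forall>v. w < v \<and> v \<le> w + k \<longrightarrow> count_bound (sieve_count d v) v) \<and>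
         sieve_count d (w + k) = 48"
  using assms
proof (induction k arbitrary: w)
  case 0
  then show ?case
    by (auto simp: sieve_check_0)
next
  case (Suc k)
  have count: "sieve_count d (Suc w) =
      (if survives_mod 3 (d mod 3) (Suc w mod 3) \<and> survives_mod 5 (d mod 5) (Suc w mod 5) \<and>
          survives_mod 7 (d mod 7) (Suc w mod 7)
       then Suc (sieve_count d w) else sieve_count d w)"
    by (simp add: sieve_count_Suc sieve_survivor_iff_residues)
  have step: "count_bound (sieve_count d (Suc w)) (Suc w) \<and>
        sieve_check (d mod 3) (d mod 5) (d mod 7) (Suc (Suc w) mod 3) (Suc (Suc w) mod 5)
          (Suc (Suc w) mod 7) (sieve_count d (Suc w)) (Suc (Suc w)) k"
    using Suc.prems unfolding count
    by (simp add: sieve_check_step succ_mod_mod Let_def split del: if_split)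
  then have IH: "(\<forall>v. Suc w < v \<and> v \<le> Suc w + k \<longrightarrow> count_bound (sieve_count d v) v) \<and>
                 sieve_count d (Suc w + k) = 48"
    by (rule Suc.IH[OF conjunct2])
  show ?case
  proof (intro conjI allI impI)
    fix v assume "w < v \<and> v \<le> w + Suc k"
    then show "count_bound (sieve_count d v) v"
      using IH step by (cases "v = Suc w") auto
  next
    show "sieve_count d (w + Suc k) = 48"
      using IH by simp
  qed
qed

lemma sieve_check_all:
  assumes "d3 \<in> {1, 2}" "d5 \<in> {1, 2, 3, 4}" "d7 \<in> {1, 2, 3, 4, 5, 6}"
  shows "sieve_check d3 d5 d7 1 1 1 0 1 105"
  using assms unfolding insert_iff empty_iff
  by (elim disjE FalseE; hypsubst; code_simp)

lemma sieve_count_initial: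
  assumes "coprime d 105"
  shows "(\<forall>v. 0 < v \<and> v \<le> 105 \<longrightarrow> count_bound (sieve_count d v) v) \<and> sieve_count d 105 = 48"
proof -
  have "\<not> r dvd d" if "r dvd 105" "1 < r" for r :: nat
    using assms that coprime_common_divisor_nat[of d 105 r] by auto
  then have "d mod 3 \<noteq> 0" "d mod 5 \<noteq> 0" "d mod 7 \<noteq> 0"
    by (simp_all add: dvd_eq_mod_eq_0)
  moreover have "d mod 3 < 3" "d mod 5 < 5" "d mod 7 < 7"
    by simp_all
  ultimately have "d mod 3 \<in> {1, 2}" "d mod 5 \<in> {1, 2, 3, 4}" "d mod 7 \<in> {1, 2, 3, 4, 5, 6}"
    by auto
  then have "sieve_check (d mod 3) (d mod 5) (d mod 7) 1 1 1 0 1 105"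
    by (rule sieve_check_all)
  then have "sieve_check (d mod 3) (d mod 5) (d mod 7) (Suc 0 mod 3) (Suc 0 mod 5) (Suc 0 mod 7)
               (sieve_count d 0) (Suc 0) 105"
    by (simp add: sieve_count_def)
  from sieve_check_sound[OF this] show ?thesis
    by simp
qed

lemma sieve_survivor_add_105: "sieve_survivor d (u + 105) = sieve_survivor d u"
proof -
  have "(u + 105) mod 3 = u mod 3" "(u + 105) mod 5 = u mod 5" "(u + 105) mod 7 = u mod 7"
    by presburger+
  then show ?thesis
    by (simp add: sieve_survivor_iff_residues)
qed

lemma sieve_count_add_105: "sieve_count d (U + 105) = sieve_count d U + sieve_count d 105"
proof (induction U)
  case (Suc U)
  have "sieve_count d (Suc U + 105) = sieve_count d (Suc (U + 105))"
    by simp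
  also have "\<dots> = sieve_count d (U + 105) + (if sieve_survivor d (Suc (U + 105)) then 1 else 0)"
    by (rule sieve_count_Suc)
  also have "sieve_survivor d (Suc (U + 105)) = sieve_survivor d (Suc U)"
    using sieve_survivor_add_105[of d "Suc U"] by simp
  also have "sieve_count d (U + 105) = sieve_count d U + sieve_count d 105"
    by (rule Suc.IH)
  finally show ?case
    by (simp add: sieve_count_Suc)
qed (simp add: sieve_count_def)

lemma count_bound_sieve_count:
  assumes "coprime d 105"
  shows "count_bound (sieve_count d U) U"
proof (induction U rule: less_induct)
  case (less U)
  note initial = sieve_count_initial[OF assms]
  show ?case
  proof (cases "U \<le> 105")
    case True
    then show ?thesis
      using initial by (cases "U = 0") (auto simp: count_bound_def sieve_count_def)
  next
    case False
    then obtain V where V: "U = V + 105"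
      by (metis add.commute le_add_diff_inverse nat_le_linear)
    then have "sieve_count d V \<le> Suc (V div 2)"
      using less.IH[of V] by (simp add: count_bound_def)
    moreover have "V div 2 + 52 \<le> U div 2"
      using V by presburger
    ultimately show ?thesis
      using initial V by (simp add: sieve_count_add_105 count_bound_def)
  qed
qed

lemma prime_1_mod_odd_eq:
  fixes p d :: nat
  assumes p: "prime p" "d dvd p - 1" and d: "odd d" "7 < d"
  shows "p = 1 + 2 * ((p - 1) div (2 * d)) * d" and "7 < p"
proof -
  have "1 < p"
    using p(1) by (rule prime_gt_1_nat)
  then have "d \<le> p - 1"
    by (intro dvd_imp_le[OF p(2)]) simp
  with d(2) show "7 < p"
    by linarith
  then have "odd p"
    using prime_odd_nat[OF p(1)] by simp
  then have "2 dvd p - 1"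
    using \<open>1 < p\<close> by presburger
  moreover have "coprime 2 d"
    using d(1) by simp
  ultimately have "2 * d dvd p - 1"
    using divides_mult p(2) by blast
  then have "2 * d * ((p - 1) div (2 * d)) = p - 1"
    by (rule dvd_mult_div_cancel)
  moreover have "2 * ((p - 1) div (2 * d)) * d = 2 * d * ((p - 1) div (2 * d))"
    by (simp add: mult_ac)
  ultimately show "p = 1 + 2 * ((p - 1) div (2 * d)) * d"
    using \<open>1 < p\<close> by linarith
qed

lemma prime_gt_7_sieve_survivor:
  assumes "prime p" "7 < p" "p = 1 + 2 * u * d"
  shows "sieve_survivor d u"
proof -
  have "\<not> r dvd p" if "r \<in> {3, 5, 7}" for r :: nat
  proof
    assume "r dvd p"
    then have "r = 1 \<or> r = p"
      using assms(1) by (simp add: prime_nat_iff)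
    then show False
      using that assms(2) by auto
  qed
  then show ?thesis
    unfolding sieve_survivor_def assms(3)[symmetric] by blast
qed

lemma card_primes_1_mod_le_sieve_count:
  assumes d: "coprime d 210" "7 < d"
  shows "card (primes_1_mod d n) \<le> sieve_count d ((n - 1) div d div 2)"
proof -
  have "odd d"
  proof
    assume "even d"
    then show False
      using coprime_common_divisor_nat[OF d(1), of 2] by simp
  qed
  have shape: "p = 1 + 2 * ((p - 1) div (2 * d)) * d" "7 < p" if "p \<in> primes_1_mod d n" for p
  proof -
    from that have p: "prime p" "d dvd p - 1"
      by (simp_all add: primes_1_mod_def primes_le_def)
    show "p = 1 + 2 * ((p - 1) div (2 * d)) * d" "7 < p"
      by (rule prime_1_mod_odd_eq[OF p \<open>odd d\<close> d(2)])+
  qed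
  have "card (primes_1_mod d n) \<le> card {u \<in> {1..(n - 1) div d div 2}. sieve_survivor d u}"
  proof (rule card_inj_on_le)
    show "inj_on (\<lambda>p. (p - 1) div (2 * d)) (primes_1_mod d n)"
    proof (rule inj_onI)
      fix p p' assume p: "p \<in> primes_1_mod d n" and p': "p' \<in> primes_1_mod d n"
        and eq: "(p - 1) div (2 * d) = (p' - 1) div (2 * d)"
      have "p = 1 + 2 * ((p' - 1) div (2 * d)) * d"
        using shape(1)[OF p] unfolding eq .
      then show "p = p'"
        using shape(1)[OF p'] by (rule trans[OF _ sym])
    qed
    show "(\<lambda>p. (p - 1) div (2 * d)) ` primes_1_mod d n \<subseteq> {u \<in> {1..(n - 1) div d div 2}. sieve_survivor d u}"
    proof
      fix u assume "u \<in> (\<lambda>p. (p - 1) div (2 * d)) ` primes_1_mod d n"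
      then obtain p where p: "p \<in> primes_1_mod d n" and u: "u = (p - 1) div (2 * d)"
        by blast
      have p_eq: "p = 1 + 2 * u * d" and "7 < p"
        using shape[OF p] unfolding u[symmetric] by blast+
      have "prime p" "p \<le> n"
        using p by (simp_all add: primes_1_mod_def primes_le_def)
      have "u \<noteq> 0"
        using p_eq \<open>7 < p\<close> by (cases "u = 0") simp_all
      moreover have "2 * u * d \<le> n - 1"
        using p_eq \<open>p \<le> n\<close> by linarith
      then have "2 * u \<le> (n - 1) div d"
        using d(2) by (simp add: less_eq_div_iff_mult_less_eq)
      then have "u \<le> (n - 1) div d div 2"
        by (simp add: less_eq_div_iff_mult_less_eq mult.commute)
      moreover have "sieve_survivor d u"
        using \<open>prime p\<close> \<open>7 < p\<close> p_eq by (rule prime_gt_7_sieve_survivor)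
      ultimately show "u \<in> {u \<in> {1..(n - 1) div d div 2}. sieve_survivor d u}"
        by simp
    qed
  qed simp
  then show ?thesis
    by (simp add: sieve_count_def)
qed

lemma card_primes_1_mod_bound:
  assumes "coprime d 210" "7 < d"
  shows "card (primes_1_mod d n) \<le> Suc ((n - 1) div d div 4)"
    and "120 \<le> (n - 1) div d \<Longrightarrow> Suc (card (primes_1_mod d n)) \<le> (n - 1) div d div 4"
proof -
  have "coprime d 105"
    using assms(1) coprime_divisors[of d d 105 210] by simp
  then have "count_bound (sieve_count d ((n - 1) div d div 2)) ((n - 1) div d div 2)"
    by (rule count_bound_sieve_count)
  moreover have "(n - 1) div d div 2 div 2 = (n - 1) div d div 4"
    by (simp add: div_mult2_eq)
  ultimately show "card (primes_1_mod d n) \<le> Suc ((n - 1) div d div 4)"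
    and "120 \<le> (n - 1) div d \<Longrightarrow> Suc (card (primes_1_mod d n)) \<le> (n - 1) div d div 4"
    using card_primes_1_mod_le_sieve_count[OF assms, of n] by (auto simp: count_bound_def)
qed

section \<open>Large primes\<close>

lemma card_transition_levels_le_2:
  fixes T :: "nat \<Rightarrow> nat"
  assumes q: "11 \<le> q" and shift: "\<And>i j. T (i + j) = T i div q ^ j"
  shows "card {j \<in> {1..n}. 0 < T j \<and> T j < 120} \<le> 2"
proof -
  let ?E = "{j \<in> {1..n}. 0 < T j \<and> T j < 120}"
  have antimono: "T j \<le> T i" if "i \<le> j" for i j
    using shift[of i "j - i"] that by simp
  have "(121 :: nat) \<le> q ^ 2"
    using q power_mono[of 11 q 2] by simp
  then have vanish: "T (i + 2) = 0" if "T i < 120" for i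
    using shift[of i 2] that by simp
  show ?thesis
  proof (cases "?E = {}")
    case True
    show ?thesis
      unfolding True by simp
  next
    case False
    have fin: "finite ?E"
      by simp
    define i where "i = Min ?E"
    have i: "i \<in> ?E"
      unfolding i_def using fin False by (rule Min_in)
    have "?E \<subseteq> {i, i + 1}"
    proof
      fix j assume j: "j \<in> ?E"
      have "i \<le> j"
        unfolding i_def using fin j by (rule Min_le)
      moreover have "j \<le> i + 1"
      proof (rule ccontr)
        assume "\<not> j \<le> i + 1"
        then have "T j \<le> T (i + 2)"
          by (intro antimono) simp
        then show False
          using vanish[of i] i j by simp
      qed
      ultimately show "j \<in> {i, i + 1}"
        by auto
    qed
    then have "card ?E \<le> card {i, i + 1}"
      by (intro card_mono) simp_all
    then show ?thesis
      by simp
  qed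
qed

lemma card_transition_levels_le:
  fixes T :: "nat \<Rightarrow> nat"
  assumes q: "11 \<le> q"
    and shift: "\<And>i j. T (i + j) = T i div q ^ j"
    and first: "120 \<le> T 1 \<or> T 1 < q"
  shows "card {j \<in> {1..n}. 0 < T j \<and> T j < 120} \<le> card {j \<in> {1..n}. 120 \<le> T j} + 1"
proof (cases "120 \<le> T 1 \<and> 1 \<le> n")
  case True
  then have "{j \<in> {1..n}. 120 \<le> T j} \<noteq> {}"
    by auto
  then have "1 \<le> card {j \<in> {1..n}. 120 \<le> T j}"
    by (simp add: Suc_le_eq card_gt_0_iff)
  then show ?thesis
    using card_transition_levels_le_2[OF q shift, of n] by linarith
next
  case False
  have tail: "T j = 0" if "2 \<le> j" "j \<le> n" for j
  proof -
    have "T (1 + 1) = T 1 div q ^ 1"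
      by (rule shift)
    then have "T 2 = 0"
      using False first that by (simp add: numeral_2_eq_2)
    have "T j = T (2 + (j - 2))"
      using that(1) by (simp only: le_add_diff_inverse)
    also have "\<dots> = T 2 div q ^ (j - 2)"
      by (rule shift)
    finally show ?thesis
      using \<open>T 2 = 0\<close> by simp
  qed
  have "{j \<in> {1..n}. 0 < T j \<and> T j < 120} \<subseteq> {1}"
  proof
    fix j assume "j \<in> {j \<in> {1..n}. 0 < T j \<and> T j < 120}"
    then show "j \<in> {1}"
      using tail[of j] by (cases "2 \<le> j") auto
  qed
  then have "card {j \<in> {1..n}. 0 < T j \<and> T j < 120} \<le> card {1 :: nat}"
    by (intro card_mono) simp_all
  then show ?thesis
    by simp
qed

lemma prime_gt_7_ge_11:
  assumes "prime (q :: nat)" "7 < q"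
  shows "11 \<le> q"
proof (rule ccontr)
  assume "\<not> 11 \<le> q"
  with assms(2) have "2 dvd q \<or> 3 dvd q"
    by presburger
  then have "q = 2 \<or> q = 3"
    using assms(1) by (auto simp: prime_nat_iff)
  with assms(2) show False
    by auto
qed

lemma prime_gt_7_coprime_210:
  assumes "prime (q :: nat)" "7 < q"
  shows "coprime q 210"
proof -
  have "\<not> q dvd 2 * (3 * (5 * 7))"
  proof
    assume "q dvd 2 * (3 * (5 * 7))"
    then have "q dvd 2 \<or> q dvd 3 \<or> q dvd 5 \<or> q dvd 7"
      using assms(1) by (simp only: prime_dvd_mult_iff)
    with assms(2) show False
      by (auto dest: dvd_imp_le)
  qed
  then show ?thesis
    using assms(1) by (simp add: prime_imp_coprime)
qed

lemma sum_le_sum_add_card: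
  fixes f h :: "'a \<Rightarrow> nat"
  assumes "finite J" "B \<subseteq> J" "E \<subseteq> J"
    and "\<And>j. j \<in> J \<Longrightarrow> f j + (if j \<in> B then 1 else 0) \<le> h j + (if j \<in> E then 1 else 0)"
  shows "(\<Sum>j\<in>J. f j) + card B \<le> (\<Sum>j\<in>J. h j) + card E"
proof -
  have indicator: "(\<Sum>j\<in>J. if j \<in> S then 1 else 0) = card S" if "S \<subseteq> J" for S
    using that assms(1) by (simp add: sum.If_cases Int_absorb1)
  have "(\<Sum>j\<in>J. f j + (if j \<in> B then 1 else 0)) \<le> (\<Sum>j\<in>J. h j + (if j \<in> E then 1 else 0))"
    using assms(4) by (rule sum_mono)
  then show ?thesis
    by (simp only: sum.distrib indicator[OF assms(2)] indicator[OF assms(3)])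
qed

lemma card_primes_1_mod_prime_power_bound:
  fixes n :: nat
  assumes q: "prime q" "7 < q" and j: "1 \<le> j"
  defines "T \<equiv> (n - 1) div q ^ j"
  shows "card (primes_1_mod (q ^ j) n) + (if 120 \<le> T then 1 else 0)
           \<le> T div 4 + (if 0 < T \<and> T < 120 then 1 else 0)"
proof -
  have "q ^ 1 \<le> q ^ j"
    using j q(2) by (intro power_increasing) simp_all
  then have "coprime (q ^ j) 210" "7 < q ^ j"
    using q prime_gt_7_coprime_210[OF q] by simp_all
  note bound = card_primes_1_mod_bound[OF this, of n, folded T_def]
  consider "120 \<le> T" | "0 < T" "T < 120" | "T = 0"
    by linarith
  then show ?thesis
  proof cases
    case 3
    then have "card (primes_1_mod (q ^ j) n) = 0"
      using card_primes_1_mod_le[of "q ^ j" n] q(2) by (simp add: T_def)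
    then show ?thesis
      using 3 by simp
  qed (use bound in auto)
qed

lemma large_prime_case:
  assumes q: "prime q" "7 < q" and a: "15000 \<le> a"
  shows "pred_primes_multiplicity q a \<le> 1 + multiplicity q (fact (a div 4) :: nat)"
proof -
  define T where "T j = (a - 1) div q ^ j" for j
  let ?E = "{j \<in> {1..a}. 0 < T j \<and> T j < 120}" and ?B = "{j \<in> {1..a}. 120 \<le> T j}"
  have q11: "11 \<le> q"
    using q by (rule prime_gt_7_ge_11)
  have "pred_primes_multiplicity q a + card ?B \<le> (\<Sum>j\<in>{1..a}. T j div 4) + card ?E"
    unfolding pred_primes_multiplicity_eq_sum_card_primes_1_mod[OF q(1)]
  proof (rule sum_le_sum_add_card)
    fix j assume "j \<in> {1..a}"
    then show "card (primes_1_mod (q ^ j) a) + (if j \<in> ?B then 1 else 0)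
                 \<le> T j div 4 + (if j \<in> ?E then 1 else 0)"
      using card_primes_1_mod_prime_power_bound[OF q, of j a] by (simp add: T_def)
  qed auto
  moreover have "card ?E \<le> card ?B + 1"
  proof (rule card_transition_levels_le[OF q11])
    show "T (i + j) = T i div q ^ j" for i j
      by (simp add: T_def power_add div_mult2_eq)
    show "120 \<le> T 1 \<or> T 1 < q"
    proof (cases "q \<le> 120")
      case True
      then have "120 * q \<le> a - 1"
        using a by linarith
      then show ?thesis
        using q11 by (simp add: T_def less_eq_div_iff_mult_less_eq)
    qed linarith
  qed
  moreover have "(\<Sum>j\<in>{1..a}. T j div 4) \<le> multiplicity q (fact (a div 4) :: nat)"
  proof -
    have "T j div 4 \<le> a div 4 div q ^ j" for j
      unfolding T_def by (simp add: div_mult2_eq[symmetric] mult.commute div_le_mono)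
    then have "(\<Sum>j\<in>{1..a}. T j div 4) \<le> (\<Sum>j\<in>{1..a}. a div 4 div q ^ j)"
      by (intro sum_mono)
    also have "\<dots> \<le> multiplicity q (fact (a div 4) :: nat)"
      using q(1) by (rule sum_div_prime_power_le_multiplicity_fact)
    finally show ?thesis .
  qed
  ultimately show ?thesis
    by linarith
qed

lemma totient_fact_dvd_totient_fact_nine_eighths:
  assumes a: "1000 * 2 ^ 2000 \<le> a" and ab: "a \<le> b"
  shows "totient (fact a) * totient (fact b) dvd totient (fact (a + b + (a + b) div 8))"
proof (rule totient_fact_mult_dvd_totient_fact[OF _ ab])
  have "a div 4 = 2 * a div 8"
    by simp
  also have "\<dots> \<le> (a + b) div 8"
    using ab by (intro div_le_mono) simp
  finally show "a + b + a div 4 \<le> a + b + (a + b) div 8"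
    by simp
next
  fix q :: nat assume q: "prime q" "q \<le> a"
  show "pred_primes_multiplicity q a \<le> 1 + multiplicity q (fact (a div 4) :: nat)"
  proof (cases "q \<le> 7")
    case True
    with q(1) a show ?thesis
      by (intro small_prime_case)
  next
    case False
    have "(2 :: nat) ^ 4 \<le> 2 ^ 2000"
      by (rule power_increasing) simp_all
    then have "15000 \<le> a"
      using a by simp
    with q(1) False show ?thesis
      by (intro large_prime_case) simp_all
  qed
qed

lemma r_ab_le_nine_eighths:
  assumes "0 < a + b"
    and "totient (fact a) * totient (fact b) dvd totient (fact (a + b + (a + b) div 8))"
  shows "r_ab a b \<le> 9 / 8"
proof -
  define e where "e = (a + b) div 8"
  have "c_ab a b \<le> a + b + e"
    unfolding c_ab_def e_def by (rule Least_le) (use assms in simp)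
  moreover have "8 * e \<le> a + b"
    by (simp add: e_def)
  ultimately have "8 * c_ab a b \<le> 9 * (a + b)"
    by arith
  then have "real (8 * c_ab a b) \<le> real (9 * (a + b))"
    by (rule of_nat_mono)
  then have "8 * real (c_ab a b) \<le> 9 * real (a + b)"
    by simp
  then show ?thesis
    using assms(1) by (simp add: r_ab_def divide_le_eq)
qed

theorem theorem1p3:
  "\<exists>N::nat. \<forall>a b :: nat. 0 < a \<and> 0 < b \<and> N \<le> a \<and> N \<le> b \<longrightarrow>
     r_ab a b \<le> 9 / 8 \<and>
     totient (fact a) * totient (fact b) dvd totient (fact (a + b + (a + b) div 8))"
proof (intro exI[of _ "1000 * 2 ^ 2000"] allI impI)
  fix a b :: nat
  assume ab: "0 < a \<and> 0 < b \<and> 1000 * 2 ^ 2000 \<le> a \<and> 1000 * 2 ^ 2000 \<le> b"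
  have dvd: "totient (fact a) * totient (fact b) dvd totient (fact (a + b + (a + b) div 8))"
  proof (cases "a \<le> b")
    case True
    then show ?thesis
      using ab by (intro totient_fact_dvd_totient_fact_nine_eighths) simp_all
  next
    case False
    then have "totient (fact b) * totient (fact a) dvd totient (fact (b + a + (b + a) div 8))"
      using ab by (intro totient_fact_dvd_totient_fact_nine_eighths) simp_all
    then show ?thesis
      by (simp add: mult.commute add.commute)
  qed
  moreover have "r_ab a b \<le> 9 / 8"
    using ab dvd by (intro r_ab_le_nine_eighths) simp_all
  ultimately show "r_ab a b \<le> 9 / 8 \<and>
      totient (fact a) * totient (fact b) dvd totient (fact (a + b + (a + b) div 8))"
    by blast
qed

end
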